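(* Let $\Gamma$ be a connected rooted Eisenbud–Neumann diagram satisfying: (a) all near weights are positive and no far weight is zero; (b) if the far weight at a node $v$ is negative then the far weights at all nodes beyond $v$ are negative; (c) all vertex multiplicities are positive. If $\Gamma$ has $\nu\ge2$ arrowheads $L_1,\dots,L_\nu$, then $\mathrm{lk}(L_i,L_i)<0$ for every $i$.
   Context: A rooted Eisenbud–Neumann (splice) diagram is a finite tree with a distinguished root vertex, whose vertices are nodes, leaves (valency one, not arrowheads) and arrowhead vertices $L_1,\dots,L_\nu$ carrying multiplicities $n_1,\dots,n_\nu$; at each node every incident edge carries a weight at that node (omitted weights equal $1$). At a node $v$, the weight on the edge leading from $v$ towards the root is the far weight at $v$; the weights at $v$ on the other incident edges are near weights at $v$. A node $w$ is beyond a node $v$ if the geodesic from $w$ to the root contains $v$. For distinct vertices $v,w$ (nodes or arrowheads), $\mathrm{lk}(v,w)$ is the product of all edge weights adjacent to but not on the geodesic between $v$ and $w$. The multiplicity of a non-arrowhead vertex $v$ is $M_v=\sum_j n_j\,\mathrm{lk}(v,L_j)$; the multiplicity of $L_j$ is $n_j$. The self-linking $\mathrm{lk}(L_i,L_i)$ is defined by $n_i\,\mathrm{lk}(L_i,L_i)=-\sum_{j\ne i}n_j\,\mathrm{lk}(L_i,L_j)$. *)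

theory Defs
  imports Main Complex_Main
begin

(* A diagram is given by a finite vertex set V, a symmetric irreflexive adjacency
   relation E, a root rt, a set A of arrowhead vertices, weights wt (wt u x is the
   weight at the node u on the edge {u,x}) and arrowhead multiplicities n. *)

definition nbrs :: "('v \<Rightarrow> 'v \<Rightarrow> bool) \<Rightarrow> 'v \<Rightarrow> 'v set" where
  "nbrs E v = {u. E v u}"

definition valency :: "('v \<Rightarrow> 'v \<Rightarrow> bool) \<Rightarrow> 'v \<Rightarrow> nat" where
  "valency E v = card (nbrs E v)"

definition is_path :: "'v set \<Rightarrow> ('v \<Rightarrow> 'v \<Rightarrow> bool) \<Rightarrow> 'v list \<Rightarrow> 'v \<Rightarrow> 'v \<Rightarrow> bool" where
  "is_path V E xs v w \<longleftrightarrow> xs \<noteq> [] \<and> hd xs = v \<and> last xs = w \<and> distinct xs \<and> set xs \<subseteq> V \<and>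
     (\<forall>i. Suc i < length xs \<longrightarrow> E (xs ! i) (xs ! Suc i))"

(* finite tree: nonempty, simple undirected graph, any two vertices joined by a unique simple path
   (this encodes connected + acyclic) *)
definition is_tree :: "'v set \<Rightarrow> ('v \<Rightarrow> 'v \<Rightarrow> bool) \<Rightarrow> bool" where
  "is_tree V E \<longleftrightarrow> finite V \<and> V \<noteq> {} \<and>
     (\<forall>u v. E u v \<longrightarrow> u \<in> V \<and> v \<in> V \<and> u \<noteq> v \<and> E v u) \<and>
     (\<forall>v\<in>V. \<forall>w\<in>V. \<exists>!xs. is_path V E xs v w)"

definition geod :: "'v set \<Rightarrow> ('v \<Rightarrow> 'v \<Rightarrow> bool) \<Rightarrow> 'v \<Rightarrow> 'v \<Rightarrow> 'v list" where
  "geod V E v w = (THE xs. is_path V E xs v w)"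

definition path_edge :: "'v list \<Rightarrow> 'v \<Rightarrow> 'v \<Rightarrow> bool" where
  "path_edge xs u x \<longleftrightarrow> (\<exists>i. Suc i < length xs \<and>
     ((xs ! i = u \<and> xs ! Suc i = x) \<or> (xs ! i = x \<and> xs ! Suc i = u)))"

definition EN_diagram :: "'v set \<Rightarrow> ('v \<Rightarrow> 'v \<Rightarrow> bool) \<Rightarrow> 'v \<Rightarrow> 'v set \<Rightarrow> bool" where
  "EN_diagram V E rt A \<longleftrightarrow> is_tree V E \<and> rt \<in> V \<and> A \<subseteq> V \<and> (\<forall>a\<in>A. valency E a = 1)"

definition is_leaf :: "'v set \<Rightarrow> ('v \<Rightarrow> 'v \<Rightarrow> bool) \<Rightarrow> 'v set \<Rightarrow> 'v \<Rightarrow> bool" where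
  "is_leaf V E A v \<longleftrightarrow> v \<in> V \<and> v \<notin> A \<and> valency E v = 1"

definition is_node :: "'v set \<Rightarrow> ('v \<Rightarrow> 'v \<Rightarrow> bool) \<Rightarrow> 'v set \<Rightarrow> 'v \<Rightarrow> bool" where
  "is_node V E A v \<longleftrightarrow> v \<in> V \<and> v \<notin> A \<and> valency E v \<noteq> 1"

(* the neighbour of v in the direction of the root (v \<noteq> rt) *)
definition far_nb :: "'v set \<Rightarrow> ('v \<Rightarrow> 'v \<Rightarrow> bool) \<Rightarrow> 'v \<Rightarrow> 'v \<Rightarrow> 'v" where
  "far_nb V E rt v = geod V E v rt ! 1"

definition is_far_edge :: "'v set \<Rightarrow> ('v \<Rightarrow> 'v \<Rightarrow> bool) \<Rightarrow> 'v \<Rightarrow> 'v \<Rightarrow> 'v \<Rightarrow> bool" where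
  "is_far_edge V E rt v x \<longleftrightarrow> v \<noteq> rt \<and> x = far_nb V E rt v"

definition far_weight :: "'v set \<Rightarrow> ('v \<Rightarrow> 'v \<Rightarrow> bool) \<Rightarrow> 'v \<Rightarrow> ('v \<Rightarrow> 'v \<Rightarrow> int) \<Rightarrow> 'v \<Rightarrow> int" where
  "far_weight V E rt wt v = wt v (far_nb V E rt v)"

definition beyond :: "'v set \<Rightarrow> ('v \<Rightarrow> 'v \<Rightarrow> bool) \<Rightarrow> 'v \<Rightarrow> 'v \<Rightarrow> 'v \<Rightarrow> bool" where
  "beyond V E rt w v \<longleftrightarrow> v \<in> set (geod V E w rt)"

definition lk :: "'v set \<Rightarrow> ('v \<Rightarrow> 'v \<Rightarrow> bool) \<Rightarrow> 'v set \<Rightarrow> ('v \<Rightarrow> 'v \<Rightarrow> int) \<Rightarrow> 'v \<Rightarrow> 'v \<Rightarrow> int" where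
  "lk V E A wt v w =
     (\<Prod>u \<in> {u \<in> set (geod V E v w). is_node V E A u}.
        \<Prod>x \<in> {x. E u x \<and> \<not> path_edge (geod V E v w) u x}. wt u x)"

definition mult :: "'v set \<Rightarrow> ('v \<Rightarrow> 'v \<Rightarrow> bool) \<Rightarrow> 'v set \<Rightarrow> ('v \<Rightarrow> 'v \<Rightarrow> int) \<Rightarrow> ('v \<Rightarrow> int) \<Rightarrow> 'v \<Rightarrow> int" where
  "mult V E A wt n v = (if v \<in> A then n v else (\<Sum>j\<in>A. n j * lk V E A wt v j))"

definition self_lk :: "'v set \<Rightarrow> ('v \<Rightarrow> 'v \<Rightarrow> bool) \<Rightarrow> 'v set \<Rightarrow> ('v \<Rightarrow> 'v \<Rightarrow> int) \<Rightarrow> ('v \<Rightarrow> int) \<Rightarrow> 'v \<Rightarrow> real" where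
  "self_lk V E A wt n i = - real_of_int (\<Sum>j\<in>A - {i}. n j * lk V E A wt i j) / real_of_int (n i)"

end

theory Submission imports Defs begin

(* Let L_i be an arrowhead, u its unique neighbour and S_i = sum_{j <> i} n_j lk(L_i,L_j),
   so that lk(L_i,L_i) = -S_i / n_i with n_i = M_{L_i} > 0.  It suffices to show S_i > 0.

   * If u is a node, neither u nor L_i is the root, and the far weight at u is negative,
     then lk(u,L_i) < 0 (it contains the negative far weight at u and otherwise only near
     weights), while lk(u,L_j) = w * lk(L_i,L_j) with w > 0 the near weight at u towards L_i.
     Hence 0 < M_u = n_i lk(u,L_i) + w S_i forces S_i > 0.
   * Otherwise every weight adjacent to a geodesic from L_i is positive: a negative far
     weight at a node x on such a geodesic would make u lie beyond x, so by (b) the far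
     weight at u would be negative.  Hence every lk(L_i,L_j) > 0 and S_i > 0. *)

lemma path_ends: "is_path V E xs v w \<Longrightarrow> v \<in> V \<and> w \<in> V"
  unfolding is_path_def by (meson hd_in_set last_in_set subsetD)

lemma path_first: "is_path V E xs v w \<Longrightarrow> xs ! 0 = v"
  unfolding is_path_def by (metis hd_conv_nth)

lemma tree_edge: "is_tree V E \<Longrightarrow> E u v \<Longrightarrow> u \<in> V \<and> v \<in> V \<and> u \<noteq> v \<and> E v u"
  unfolding is_tree_def by metis

lemma finite_nbrs: "is_tree V E \<Longrightarrow> finite (nbrs E v)"
  using tree_edge[of V E v] unfolding is_tree_def nbrs_def
  by (metis (no_types, lifting) finite_subset mem_Collect_eq subsetI)

lemma geod_path: "is_tree V E \<Longrightarrow> v \<in> V \<Longrightarrow> w \<in> V \<Longrightarrow> is_path V E (geod V E v w) v w"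
  unfolding geod_def is_tree_def by (metis theI')

lemma geod_eq:
  assumes t: "is_tree V E" and p: "is_path V E xs v w"
  shows "geod V E v w = xs"
proof -
  have vw: "v \<in> V" "w \<in> V" using path_ends[OF p] by auto
  then have "\<exists>!xs. is_path V E xs v w" using t unfolding is_tree_def by metis
  then show ?thesis using p geod_path[OF t vw] by metis
qed

lemma geod_self: "is_tree V E \<Longrightarrow> v \<in> V \<Longrightarrow> geod V E v v = [v]"
  by (rule geod_eq) (auto simp: is_path_def)

lemma geod_edge: "is_tree V E \<Longrightarrow> E a b \<Longrightarrow> geod V E a b = [a, b]"
  by (rule geod_eq) (use tree_edge[of V E a b] in \<open>auto simp: is_path_def less_Suc_eq\<close>)

lemma path_length: "is_path V E xs v w \<Longrightarrow> v \<noteq> w \<Longrightarrow> length xs \<ge> 2"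
  unfolding is_path_def
  by (metis One_nat_def Suc_1 hd_conv_nth last_conv_nth le_SucE le_zero_eq length_0_conv
      not_less_eq_eq diff_Suc_1)

lemma path_rev:
  assumes t: "is_tree V E" and p: "is_path V E xs v w"
  shows "is_path V E (rev xs) w v"
proof -
  have "E (rev xs ! i) (rev xs ! Suc i)" if i: "Suc i < length xs" for i
  proof -
    define j where "j = length xs - Suc (Suc i)"
    have "Suc j < length xs" "rev xs ! i = xs ! Suc j" "rev xs ! Suc i = xs ! j"
      using i unfolding j_def by (auto simp: rev_nth Suc_diff_Suc)
    then show ?thesis using p tree_edge[OF t] unfolding is_path_def by metis
  qed
  then show ?thesis using p unfolding is_path_def by (auto simp: hd_rev last_rev)
qed

lemma path_take:
  "is_path V E xs v w \<Longrightarrow> k < length xs \<Longrightarrow> is_path V E (take (Suc k) xs) v (xs ! k)"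
  unfolding is_path_def
  by (auto simp: hd_take last_conv_nth dest: in_set_takeD)

lemma path_drop:
  "is_path V E xs v w \<Longrightarrow> k < length xs \<Longrightarrow> is_path V E (drop k xs) (xs ! k) w"
  unfolding is_path_def
  by (auto simp: hd_drop_conv_nth less_diff_conv dest: in_set_dropD)

lemma path_append:
  assumes p1: "is_path V E xs a b" and p2: "is_path V E ys b c" and d: "set xs \<inter> set ys \<subseteq> {b}"
  shows "is_path V E (xs @ tl ys) a c"
proof -
  obtain zs where ys: "ys = b # zs" using p2 unfolding is_path_def by (metis list.collapse)
  have xs: "last xs = b" "xs \<noteq> []" "hd xs = a" using p1 unfolding is_path_def by auto
  have "b \<notin> set zs" using p2 unfolding ys is_path_def by simp
  then have "set xs \<inter> set zs = {}" using d unfolding ys by auto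
  then have dist: "distinct (xs @ zs)" using p1 p2 unfolding ys is_path_def by simp
  have edges: "E ((xs @ zs) ! i) ((xs @ zs) ! Suc i)" if i: "Suc i < length (xs @ zs)" for i
  proof -
    consider "Suc i < length xs" | "Suc i = length xs" | "Suc i > length xs" by linarith
    then show ?thesis
    proof cases
      case 1 then show ?thesis using p1 unfolding is_path_def by (simp add: nth_append)
    next
      case 2
      then have "i = length xs - 1" by simp
      then have "(xs @ zs) ! i = ys ! 0" "(xs @ zs) ! Suc i = ys ! 1"
        using xs i 2 unfolding ys by (auto simp: nth_append last_conv_nth)
      moreover have "E (ys ! 0) (ys ! 1)" using p2 i 2 unfolding is_path_def ys by auto
      ultimately show ?thesis by simp
    next
      case 3
      then have "(xs @ zs) ! i = ys ! Suc (i - length xs)"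
          "(xs @ zs) ! Suc i = ys ! Suc (Suc (i - length xs))"
          "Suc (Suc (i - length xs)) < length ys"
        using i unfolding ys by (auto simp: nth_append Suc_diff_le)
      then show ?thesis using p2 unfolding is_path_def by auto
    qed
  qed
  have "last (xs @ zs) = c"
    using p2 xs unfolding ys is_path_def by (cases "zs = []") auto
  moreover have "set (xs @ zs) \<subseteq> V" using p1 p2 unfolding ys is_path_def by auto
  ultimately show ?thesis using dist edges xs unfolding ys is_path_def by simp
qed

lemma path_interior_valency:
  assumes t: "is_tree V E" and p: "is_path V E xs a b" and k: "0 < k" "Suc k < length xs"
  shows "valency E (xs ! k) \<ge> 2"
proof -
  have edges: "\<And>j. Suc j < length xs \<Longrightarrow> E (xs ! j) (xs ! Suc j)"
    using p unfolding is_path_def by blast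
  have "E (xs ! (k - 1)) (xs ! k)" using edges[of "k - 1"] k by simp
  then have "xs ! (k - 1) \<in> nbrs E (xs ! k)" using tree_edge[OF t] unfolding nbrs_def by blast
  moreover have "xs ! Suc k \<in> nbrs E (xs ! k)" using edges k unfolding nbrs_def by blast
  moreover have "xs ! (k - 1) \<noteq> xs ! Suc k"
    using p k unfolding is_path_def by (simp add: nth_eq_iff_index_eq)
  ultimately have "card {xs ! (k - 1), xs ! Suc k} \<le> card (nbrs E (xs ! k))"
    by (intro card_mono[OF finite_nbrs[OF t]]) auto
  with \<open>xs ! (k - 1) \<noteq> xs ! Suc k\<close> show ?thesis unfolding valency_def by simp
qed

lemma path_second_vertex:
  assumes p: "is_path V E xs a b" and ab: "a \<noteq> b" and only: "\<And>y. E a y \<Longrightarrow> y = u"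
  shows "xs ! 1 = u"
proof -
  have "E (xs ! 0) (xs ! 1)" using p path_length[OF p ab] unfolding is_path_def by auto
  then show ?thesis using only path_first[OF p] by simp
qed

lemma far_nb_edge:
  assumes t: "is_tree V E" and "rt \<in> V" "v \<in> V" "v \<noteq> rt"
  shows "E v (far_nb V E rt v)"
proof -
  have p: "is_path V E (geod V E v rt) v rt" using geod_path assms by metis
  then have "E (geod V E v rt ! 0) (geod V E v rt ! 1)"
    using path_length[OF p \<open>v \<noteq> rt\<close>] unfolding is_path_def by auto
  then show ?thesis using path_first[OF p] unfolding far_nb_def by simp
qed

(* A vertex of valency one other than the root is never passed on the way to the root, so it
   is not the far neighbour of any vertex. *)
lemma far_nb_not_valency_one:
  assumes t: "is_tree V E" and "rt \<in> V" "u \<in> V" "u \<noteq> rt" "i \<noteq> rt" and "valency E i = 1"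
  shows "far_nb V E rt u \<noteq> i"
proof
  define G where "G = geod V E u rt"
  have G: "is_path V E G u rt" unfolding G_def using geod_path assms by metis
  assume "far_nb V E rt u = i"
  then have Gi: "G ! 1 = i" unfolding G_def far_nb_def by simp
  have "length G \<noteq> 2"
  proof
    assume "length G = 2"
    then have "last G = i" using Gi by (subst last_conv_nth) auto
    then show False using G \<open>i \<noteq> rt\<close> unfolding is_path_def by simp
  qed
  then have "Suc 1 < length G" using path_length[OF G \<open>u \<noteq> rt\<close>] by simp
  then show False using path_interior_valency[OF t G, of 1] Gi \<open>valency E i = 1\<close> by simp
qed

(* Uniqueness of paths: two paths leaving x that meet again in a vertex z <> x both run along
   the geodesic from x to z, so they leave x along the same edge. *)
lemma paths_meeting_share_first_edge:
  assumes t: "is_tree V E" and Q: "is_path V E Q x c" and R: "is_path V E R x d"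
    and z: "z \<in> set Q" "z \<in> set R" "z \<noteq> x"
  shows "Q ! 1 = R ! 1"
proof -
  obtain q where q: "q < length Q" "Q ! q = z" using z(1) by (meson in_set_conv_nth)
  obtain r where r: "r < length R" "R ! r = z" using z(2) by (meson in_set_conv_nth)
  have "q \<noteq> 0" using q(2) z(3) path_first[OF Q] by (cases q) auto
  have "r \<noteq> 0" using r(2) z(3) path_first[OF R] by (cases r) auto
  have "take (Suc q) Q = take (Suc r) R"
    using geod_eq[OF t path_take[OF Q q(1)]] geod_eq[OF t path_take[OF R r(1)]] q(2) r(2) by simp
  then have "take (Suc q) Q ! 1 = take (Suc r) R ! 1" by simp
  then show ?thesis using \<open>q \<noteq> 0\<close> \<open>r \<noteq> 0\<close> by simp
qed

(* If the edge from a vertex x = P!k of a path towards the root leaves the path, then the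
   geodesic from any earlier vertex of the path to the root runs along the path up to x and
   continues along the geodesic from x; in particular that earlier vertex lies beyond x. *)
lemma beyond_along_path:
  assumes t: "is_tree V E" and rtV: "rt \<in> V" and P: "is_path V E P a b"
    and k: "k < length P" and m: "m \<le> k" and xrt: "P ! k \<noteq> rt"
    and off: "\<not> path_edge P (P ! k) (far_nb V E rt (P ! k))"
  shows "beyond V E rt (P ! m) (P ! k)"
proof -
  define x where "x = P ! k"
  have xV: "x \<in> V" using P k unfolding x_def is_path_def by (meson nth_mem subsetD)
  define Q where "Q = geod V E x rt"
  have Q: "is_path V E Q x rt" unfolding Q_def using geod_path[OF t xV rtV] .
  define S where "S = drop m (take (Suc k) P)"
  have S: "is_path V E S (P ! m) x"
    unfolding S_def x_def using path_drop[OF path_take[OF P k], of m] m k by simp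
  have disj: "set S \<inter> set Q \<subseteq> {x}"
  proof
    fix z assume z: "z \<in> set S \<inter> set Q"
    show "z \<in> {x}"
    proof (rule ccontr)
      assume "z \<notin> {x}"
      then have "Q ! 1 = rev S ! 1"
        using paths_meeting_share_first_edge[OF t Q path_rev[OF t S]] z by auto
      moreover have "length S = Suc k - m" unfolding S_def using k by simp
      moreover have "m \<noteq> k"
      proof
        assume "m = k"
        then have "S = [x]" unfolding S_def x_def using k by (simp add: take_Suc_conv_app_nth)
        then show False using z \<open>z \<notin> {x}\<close> by simp
      qed
      then have "m < k" using m by simp
      ultimately have "Q ! 1 = P ! (k - 1)" unfolding S_def using k by (simp add: rev_nth)
      then have "path_edge P x (Q ! 1)"
        using \<open>m < k\<close> k unfolding path_edge_def x_def by (intro exI[of _ "k - 1"]) simp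
      then show False using off unfolding x_def Q_def far_nb_def by simp
    qed
  qed
  have "geod V E (P ! m) rt = S @ tl Q" using geod_eq[OF t path_append[OF S Q disj]] .
  moreover have "x \<in> set S" using S unfolding is_path_def by (metis last_in_set)
  ultimately show ?thesis unfolding beyond_def x_def by simp
qed

lemma path_edge_Cons:
  "path_edge (a # xs) x y \<longleftrightarrow>
     (xs \<noteq> [] \<and> ((a = x \<and> hd xs = y) \<or> (a = y \<and> hd xs = x))) \<or> path_edge xs x y"
proof
  assume "path_edge (a # xs) x y"
  then obtain i where i: "Suc i < length (a # xs)"
     "((a # xs) ! i = x \<and> (a # xs) ! Suc i = y) \<or> ((a # xs) ! i = y \<and> (a # xs) ! Suc i = x)"
    unfolding path_edge_def by blast
  then show "(xs \<noteq> [] \<and> ((a = x \<and> hd xs = y) \<or> (a = y \<and> hd xs = x))) \<or> path_edge xs x y"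
    unfolding path_edge_def by (cases i) (auto simp: hd_conv_nth)
next
  assume h: "(xs \<noteq> [] \<and> ((a = x \<and> hd xs = y) \<or> (a = y \<and> hd xs = x))) \<or> path_edge xs x y"
  show "path_edge (a # xs) x y"
  proof (cases "path_edge xs x y")
    case True
    then obtain i where "Suc i < length xs" "(xs ! i = x \<and> xs ! Suc i = y) \<or> (xs ! i = y \<and> xs ! Suc i = x)"
      unfolding path_edge_def by blast
    then show ?thesis unfolding path_edge_def by (intro exI[of _ "Suc i"]) auto
  next
    case False
    then show ?thesis using h unfolding path_edge_def by (intro exI[of _ 0]) (auto simp: hd_conv_nth)
  qed
qed

lemma path_edge_set: "path_edge xs x y \<Longrightarrow> x \<in> set xs \<and> y \<in> set xs"
  unfolding path_edge_def by (metis Suc_lessD nth_mem)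

lemma lk_edge:
  assumes t: "is_tree V E" and "E u i" and "is_node V E A u" and "\<not> is_node V E A i"
  shows "lk V E A wt u i = (\<Prod>y \<in> {y. E u y \<and> y \<noteq> i}. wt u y)"
proof -
  have ui: "u \<noteq> i" using tree_edge[OF t \<open>E u i\<close>] by simp
  have "{x \<in> set [u, i]. is_node V E A x} = {u}" using assms by auto
  moreover have "path_edge [u, i] u y \<longleftrightarrow> y = i" for y
    using ui by (auto simp: path_edge_Cons path_edge_def)
  ultimately show ?thesis unfolding lk_def geod_edge[OF t \<open>E u i\<close>] by simp
qed

lemma lk_shift:
  assumes t: "is_tree V E" and P: "is_path V E P i j" and ij: "i \<noteq> j" and P1: "P ! 1 = u"
    and inode: "\<not> is_node V E A i" and un: "is_node V E A u"
  shows "lk V E A wt u j = wt u i * lk V E A wt i j"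
proof -
  obtain T where Pc: "P = i # T" using P unfolding is_path_def by (metis list.collapse)
  have "drop 1 P = T" unfolding Pc by simp
  then have T: "is_path V E T u j" using path_drop[OF P, of 1] path_length[OF P ij] P1 by simp
  have Tne: "T \<noteq> []" and hdT: "hd T = u" using T unfolding is_path_def by auto
  have iT: "i \<notin> set T" using P Pc unfolding is_path_def by simp
  define N where "N = {x \<in> set T. is_node V E A x}"
  have N: "{x \<in> set P. is_node V E A x} = N" unfolding N_def Pc using inode by auto
  have fN: "finite N" unfolding N_def by simp
  have uN: "u \<in> N" unfolding N_def using un hdT Tne by auto
  define F where "F = (\<lambda>x. \<Prod>y \<in> {y. E x y \<and> \<not> path_edge P x y}. wt x y)"
  define G where "G = (\<lambda>x. \<Prod>y \<in> {y. E x y \<and> \<not> path_edge T x y}. wt x y)"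
  have pe: "\<And>x y. path_edge P x y \<longleftrightarrow> (x = i \<and> y = u) \<or> (x = u \<and> y = i) \<or> path_edge T x y"
    unfolding Pc using Tne hdT by (auto simp: path_edge_Cons)
  have FG: "F x = G x" if "x \<in> N - {u}" for x
  proof -
    have "x \<noteq> i" "x \<noteq> u" using that iT unfolding N_def by auto
    then show ?thesis unfolding F_def G_def using pe by simp
  qed
  have fin: "finite {y. E u y \<and> \<not> path_edge P u y}"
    using finite_nbrs[OF t, of u] unfolding nbrs_def by (simp add: finite_subset[of _ "{y. E u y}"])
  have "E u i" using P P1 path_length[OF P ij] unfolding Pc is_path_def
    by (metis One_nat_def Suc_1 Suc_le_lessD nth_Cons_0 tree_edge[OF t])
  moreover have "\<not> path_edge T u i" using path_edge_set iT by metis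
  ultimately have "{y. E u y \<and> \<not> path_edge T u y} = insert i {y. E u y \<and> \<not> path_edge P u y}"
    using pe by auto
  moreover have "i \<notin> {y. E u y \<and> \<not> path_edge P u y}" using pe by auto
  ultimately have Gu: "G u = wt u i * F u" unfolding G_def F_def using fin by simp
  have "lk V E A wt u j = prod G N" unfolding lk_def geod_eq[OF t T] G_def N_def by simp
  also have "\<dots> = G u * prod G (N - {u})" using prod.remove[OF fN uN] .
  also have "prod G (N - {u}) = prod F (N - {u})" using FG by (metis prod.cong)
  also have "G u * prod F (N - {u}) = wt u i * prod F N" using Gu prod.remove[OF fN uN, of F] by simp
  also have "prod F N = lk V E A wt i j" unfolding lk_def geod_eq[OF t P] F_def N[symmetric] by simp
  finally show ?thesis .
qed

definition lk_sum :: "'v set \<Rightarrow> ('v \<Rightarrow> 'v \<Rightarrow> bool) \<Rightarrow> 'v set \<Rightarrow> ('v \<Rightarrow> 'v \<Rightarrow> int) \<Rightarrow> ('v \<Rightarrow> int) \<Rightarrow> 'v \<Rightarrow> int"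
  where "lk_sum V E A wt n i = (\<Sum>j\<in>A - {i}. n j * lk V E A wt i j)"

locale signed_EN_diagram =
  fixes V :: "'v set" and E :: "'v \<Rightarrow> 'v \<Rightarrow> bool" and rt :: 'v and A :: "'v set"
    and wt :: "'v \<Rightarrow> 'v \<Rightarrow> int" and n :: "'v \<Rightarrow> int"
  assumes diag: "EN_diagram V E rt A"
    and near_pos: "\<And>v x. is_node V E A v \<Longrightarrow> E v x \<Longrightarrow> \<not> is_far_edge V E rt v x \<Longrightarrow> wt v x > 0"
    and far_nz: "\<And>v. is_node V E A v \<Longrightarrow> v \<noteq> rt \<Longrightarrow> far_weight V E rt wt v \<noteq> 0"
    and far_neg: "\<And>v w. is_node V E A v \<Longrightarrow> v \<noteq> rt \<Longrightarrow> far_weight V E rt wt v < 0 \<Longrightarrow>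
                    is_node V E A w \<Longrightarrow> w \<noteq> v \<Longrightarrow> beyond V E rt w v \<Longrightarrow>
                    far_weight V E rt wt w < 0"
    and mult_pos: "\<And>v. v \<in> V \<Longrightarrow> mult V E A wt n v > 0"
begin

lemma tree: "is_tree V E" and root_in_V: "rt \<in> V" and arrowheads_in_V: "A \<subseteq> V"
  using diag unfolding EN_diagram_def by auto

lemma finite_arrowheads: "finite A"
  using tree arrowheads_in_V finite_subset unfolding is_tree_def by blast

lemma arrowhead_mult_pos: "j \<in> A \<Longrightarrow> 0 < n j"
  using mult_pos[of j] arrowheads_in_V unfolding mult_def by auto

lemma arrowhead_neighbour_unique: "i \<in> A \<Longrightarrow> E i u \<Longrightarrow> E i y \<Longrightarrow> y = u"
  using diag unfolding EN_diagram_def valency_def nbrs_def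
  by (metis (mono_tags) card_1_singletonE mem_Collect_eq singletonD)

(* Interior vertices of paths have valency at least 2, so they are neither leaves nor
   arrowheads: they are nodes. *)
lemma path_interior_node:
  assumes "is_path V E P a b" "0 < k" "Suc k < length P"
  shows "is_node V E A (P ! k)"
proof -
  have "valency E (P ! k) \<ge> 2" using path_interior_valency[OF tree assms] .
  moreover have "P ! k \<in> V" using assms unfolding is_path_def by auto
  ultimately show ?thesis using diag unfolding is_node_def EN_diagram_def by auto
qed

(* M_u for the neighbour u of an arrowhead i: the terms j <> i factor through lk(i,j). *)
lemma mult_at_arrowhead_neighbour:
  assumes iA: "i \<in> A" and "E i u" and un: "is_node V E A u"
  shows "mult V E A wt n u = n i * lk V E A wt u i + wt u i * lk_sum V E A wt n i"
proof -
  have inode: "\<not> is_node V E A i" using iA unfolding is_node_def by simp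
  have shift: "lk V E A wt u j = wt u i * lk V E A wt i j" if j: "j \<in> A - {i}" for j
  proof -
    have P: "is_path V E (geod V E i j) i j"
      using geod_path[OF tree] iA j arrowheads_in_V by auto
    have "geod V E i j ! 1 = u"
      using path_second_vertex[OF P] j arrowhead_neighbour_unique[OF iA \<open>E i u\<close>] by auto
    then show ?thesis using lk_shift[OF tree P _ _ inode un] j by auto
  qed
  have "u \<notin> A" using un unfolding is_node_def by simp
  then have "mult V E A wt n u = n i * lk V E A wt u i + (\<Sum>j\<in>A - {i}. n j * lk V E A wt u j)"
    unfolding mult_def using sum.remove[OF finite_arrowheads iA] by simp
  also have "(\<Sum>j\<in>A - {i}. n j * lk V E A wt u j) = wt u i * lk_sum V E A wt n i"
    unfolding lk_sum_def sum_distrib_left using shift by (simp add: algebra_simps)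
  finally show ?thesis .
qed

(* If the far weight at the neighbour u of an arrowhead i is negative, then lk(u,i) < 0:
   it is that far weight times near weights (the far edge does not lead to i). *)
lemma lk_to_arrowhead_neg:
  assumes iA: "i \<in> A" and "E i u" and un: "is_node V E A u" and "u \<noteq> rt" "i \<noteq> rt"
    and neg: "far_weight V E rt wt u < 0"
  shows "lk V E A wt u i < 0"
proof -
  define f where "f = far_nb V E rt u"
  have Eui: "E u i" and uV: "u \<in> V" using tree_edge[OF tree \<open>E i u\<close>] by auto
  have "f \<noteq> i" unfolding f_def
    using far_nb_not_valency_one[OF tree root_in_V uV \<open>u \<noteq> rt\<close> \<open>i \<noteq> rt\<close>] iA diag
    unfolding EN_diagram_def by auto
  define Y where "Y = {y. E u y \<and> y \<noteq> i}"
  have finY: "finite Y" using finite_nbrs[OF tree, of u] unfolding Y_def nbrs_def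
    by (simp add: finite_subset[of _ "{y. E u y}"])
  have fY: "f \<in> Y" unfolding Y_def f_def
    using far_nb_edge[OF tree root_in_V uV \<open>u \<noteq> rt\<close>] \<open>f \<noteq> i\<close> f_def by simp
  have "lk V E A wt u i = wt u f * (\<Prod>y\<in>Y - {f}. wt u y)"
    using lk_edge[OF tree Eui un, of wt] iA prod.remove[OF finY fY, of "wt u"]
    unfolding Y_def is_node_def by simp
  moreover have "(\<Prod>y\<in>Y - {f}. wt u y) > 0"
    using near_pos[OF un] unfolding Y_def is_far_edge_def f_def by (intro prod_pos) auto
  moreover have "wt u f < 0" using neg unfolding far_weight_def f_def .
  ultimately show ?thesis by (simp add: mult_neg_pos)
qed

(* First case: 0 < M_u = n_i lk(u,i) + w(u,i) S_i with n_i lk(u,i) < 0 and w(u,i) > 0. *)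
lemma lk_sum_pos_if_far_weight_neg:
  assumes iA: "i \<in> A" and "E i u" and un: "is_node V E A u" and "u \<noteq> rt" "i \<noteq> rt"
    and "far_weight V E rt wt u < 0"
  shows "0 < lk_sum V E A wt n i"
proof -
  have uV: "u \<in> V" and Eui: "E u i" using tree_edge[OF tree \<open>E i u\<close>] by auto
  have "wt u i > 0"
    using near_pos[OF un Eui] far_nb_not_valency_one[OF tree root_in_V uV \<open>u \<noteq> rt\<close> \<open>i \<noteq> rt\<close>]
      iA diag unfolding is_far_edge_def EN_diagram_def by auto
  moreover have "n i * lk V E A wt u i < 0"
    using arrowhead_mult_pos[OF iA] lk_to_arrowhead_neg[OF assms] by (simp add: mult_pos_neg)
  moreover have "0 < n i * lk V E A wt u i + wt u i * lk_sum V E A wt n i"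
    using mult_pos[OF uV] mult_at_arrowhead_neighbour[OF iA \<open>E i u\<close> un] by simp
  ultimately show ?thesis by (smt (verit) zero_less_mult_pos)
qed

(* Sign propagation: a negative far weight at a node x on a geodesic from the arrowhead i,
   whose far edge leaves the geodesic, makes the neighbour u of i lie beyond x; by (b) the
   far weight at u is then negative as well. *)
lemma far_weight_neg_propagates:
  assumes iA: "i \<in> A" and "E i u" and j: "j \<in> V" "j \<noteq> i"
    and x: "x \<in> set (geod V E i j)" "is_node V E A x" "x \<noteq> rt"
    and neg: "far_weight V E rt wt x < 0"
    and off: "\<not> path_edge (geod V E i j) x (far_nb V E rt x)"
  shows "is_node V E A u \<and> u \<noteq> rt \<and> i \<noteq> rt \<and> far_weight V E rt wt u < 0"
proof -
  let ?P = "geod V E i j"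
  have iV: "i \<in> V" and uV: "u \<in> V" using iA arrowheads_in_V tree_edge[OF tree \<open>E i u\<close>] by auto
  have P: "is_path V E ?P i j" using geod_path[OF tree iV j(1)] .
  have P1: "?P ! 1 = u"
    using path_second_vertex[OF P] j(2) arrowhead_neighbour_unique[OF iA \<open>E i u\<close>] by auto
  obtain k where k: "k < length ?P" "?P ! k = x" using x(1) by (auto simp: in_set_conv_nth)
  have "k \<noteq> 0"
  proof
    assume "k = 0"
    then have "x = i" using k path_first[OF P] by simp
    then show False using x(2) iA unfolding is_node_def by simp
  qed
  have xrt: "?P ! k \<noteq> rt" and off': "\<not> path_edge ?P (?P ! k) (far_nb V E rt (?P ! k))"
    using x(3) off k(2) by simp_all
  have "beyond V E rt (?P ! 0) (?P ! k)" "beyond V E rt (?P ! 1) (?P ! k)"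
    using beyond_along_path[OF tree root_in_V P k(1) _ xrt off'] \<open>k \<noteq> 0\<close> by simp_all
  then have beyond_i: "beyond V E rt i x" and beyond_u: "beyond V E rt u x"
    using path_first[OF P] P1 k(2) by simp_all
  have "i \<noteq> rt"
  proof
    assume "i = rt"
    then have "x = i" using beyond_i geod_self[OF tree iV] unfolding beyond_def by simp
    then show False using x(2) iA unfolding is_node_def by simp
  qed
  moreover have "u \<noteq> rt"
  proof
    assume "u = rt"
    then have "x = u" using beyond_u geod_self[OF tree uV] unfolding beyond_def by simp
    then show False using x(3) \<open>u = rt\<close> by simp
  qed
  moreover have "is_node V E A u \<and> far_weight V E rt wt u < 0"
  proof (cases "x = u")
    case True then show ?thesis using x(2) neg by simp
  next
    case False
    then have "k \<noteq> 1" using k(2) P1 by auto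
    then have "Suc 1 < length ?P" using k(1) \<open>k \<noteq> 0\<close> by simp
    then have "is_node V E A u" using path_interior_node[OF P, of 1] P1 by simp
    with far_neg[OF x(2,3) neg _ not_sym[OF False] beyond_u] show ?thesis by simp
  qed
  ultimately show ?thesis by simp
qed

(* Second case: unless the far weight at u is negative, every weight adjacent to a geodesic
   from the arrowhead i is positive, hence lk(i,j) > 0. *)
lemma lk_from_arrowhead_pos:
  assumes iA: "i \<in> A" and "E i u" and jA: "j \<in> A" "j \<noteq> i"
    and not_neg: "\<not> (is_node V E A u \<and> u \<noteq> rt \<and> i \<noteq> rt \<and> far_weight V E rt wt u < 0)"
  shows "0 < lk V E A wt i j"
  unfolding lk_def
proof (intro prod_pos)
  fix x y assume x: "x \<in> {x \<in> set (geod V E i j). is_node V E A x}"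
    and y: "y \<in> {y. E x y \<and> \<not> path_edge (geod V E i j) x y}"
  have jV: "j \<in> V" using jA arrowheads_in_V by auto
  show "0 < wt x y"
  proof (cases "is_far_edge V E rt x y")
    case False then show ?thesis using near_pos x y by simp
  next
    case True
    then have "x \<noteq> rt" and yf: "y = far_nb V E rt x" unfolding is_far_edge_def by auto
    then have "\<not> far_weight V E rt wt x < 0"
      using far_weight_neg_propagates[OF iA \<open>E i u\<close> jV \<open>j \<noteq> i\<close>] x y not_neg by auto
    then show ?thesis using far_nz[of x] x \<open>x \<noteq> rt\<close> yf unfolding far_weight_def by auto
  qed
qed

lemma lk_sum_pos:
  assumes iA: "i \<in> A" and other: "A - {i} \<noteq> {}"
  shows "0 < lk_sum V E A wt n i"
proof -
  have "card (nbrs E i) = 1" using diag iA unfolding EN_diagram_def valency_def by simp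
  then obtain u where "nbrs E i = {u}" by (rule card_1_singletonE)
  then have "E i u" unfolding nbrs_def by auto
  show ?thesis
  proof (cases "is_node V E A u \<and> u \<noteq> rt \<and> i \<noteq> rt \<and> far_weight V E rt wt u < 0")
    case True then show ?thesis using lk_sum_pos_if_far_weight_neg[OF iA \<open>E i u\<close>] by blast
  next
    case False
    then have "0 < n j * lk V E A wt i j" if "j \<in> A - {i}" for j
      using lk_from_arrowhead_pos[OF iA \<open>E i u\<close>] arrowhead_mult_pos that by simp
    then show ?thesis unfolding lk_sum_def using finite_arrowheads other by (intro sum_pos) auto
  qed
qed

end

theorem lemma3p16:
  fixes V :: "'v set" and E :: "'v \<Rightarrow> 'v \<Rightarrow> bool" and rt :: 'v and A :: "'v set"
    and wt :: "'v \<Rightarrow> 'v \<Rightarrow> int" and n :: "'v \<Rightarrow> int"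
  assumes diag: "EN_diagram V E rt A"
    and near_pos: "\<And>v x. is_node V E A v \<Longrightarrow> E v x \<Longrightarrow> \<not> is_far_edge V E rt v x \<Longrightarrow> wt v x > 0"
    and far_nz: "\<And>v. is_node V E A v \<Longrightarrow> v \<noteq> rt \<Longrightarrow> far_weight V E rt wt v \<noteq> 0"
    and far_neg: "\<And>v w. is_node V E A v \<Longrightarrow> v \<noteq> rt \<Longrightarrow> far_weight V E rt wt v < 0 \<Longrightarrow>
                    is_node V E A w \<Longrightarrow> w \<noteq> v \<Longrightarrow> beyond V E rt w v \<Longrightarrow>
                    far_weight V E rt wt w < 0"
    and mult_pos: "\<And>v. v \<in> V \<Longrightarrow> mult V E A wt n v > 0"
    and two: "card A \<ge> 2"
  shows "\<forall>i\<in>A. self_lk V E A wt n i < 0"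
proof
  interpret signed_EN_diagram V E rt A wt n
    using assms by unfold_locales
  fix i assume iA: "i \<in> A"
  have "A - {i} \<noteq> {}"
  proof
    assume "A - {i} = {}"
    then have "card A \<le> card {i}" using card_mono[of "{i}" A] by auto
    then show False using two by simp
  qed
  then have "0 < lk_sum V E A wt n i" using lk_sum_pos[OF iA] by simp
  then show "self_lk V E A wt n i < 0"
    using arrowhead_mult_pos[OF iA] unfolding self_lk_def lk_sum_def[symmetric]
    by (simp add: divide_neg_pos)
qed

end
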